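(* Let $m\ge2$, $n\ge1$ and $\mathcal{A}=(a_{i_1i_2\cdots i_m})\in\mathbb{R}_+^{[m,n]}$ with $r_i(\mathcal{A})\neq0$ for all $i\in[n]$. Then \[\min_{i\in[n]}\frac{r_i(\mathcal{A}^2)}{(r_i(\mathcal{A}))^{m-1}}\le\rho(\mathcal{A})\le\max_{i\in[n]}\frac{r_i(\mathcal{A}^2)}{(r_i(\mathcal{A}))^{m-1}}.\]
   Context: $[n]=\{1,\ldots,n\}$. $\mathbb{R}_+^{[m,n]}$ denotes the set of order $m$, dimension $n$ tensors $\mathcal{A}=(a_{i_1\cdots i_m})$, $i_j\in[n]$, with nonnegative real entries. For a tensor $\mathcal{T}=(t_{i_1\cdots i_p})$ of order $p$ and dimension $n$, $r_i(\mathcal{T})=\sum_{i_2,\ldots,i_p=1}^n|t_{ii_2\cdots i_p}|$. $\mathcal{A}^2=\mathcal{A}\mathcal{A}$ is the general product: for $\mathcal{A}$ of order $m$ and $\mathcal{B}$ of order $k$, $\mathcal{A}\mathcal{B}=(c_{i\alpha_1\cdots\alpha_{m-1}})$ is the order $(m-1)(k-1)+1$, dimension $n$ tensor with $c_{i\alpha_1\cdots\alpha_{m-1}}=\sum_{i_2,\ldots,i_m=1}^n a_{ii_2\cdots i_m}b_{i_2\alpha_1}\cdots b_{i_m\alpha_{m-1}}$, $i\in[n]$, $\alpha_j\in[n]^{k-1}$ (where $b_{j\alpha}$ with $\alpha=(j_2,\ldots,j_k)$ means $b_{jj_2\cdots j_k}$). Eigenvalues: $\lambda\in\mathbb{C}$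 is an eigenvalue of $\mathcal{A}$ if there is a nonzero $x\in\mathbb{C}^n$ with $\sum_{i_2,\ldots,i_m=1}^n a_{ii_2\cdots i_m}x_{i_2}\cdots x_{i_m}=\lambda x_i^{m-1}$ for all $i\in[n]$; $\rho(\mathcal{A})$ is the maximum modulus of the eigenvalues of $\mathcal{A}$. *)

theory Defs
  imports Complex_Main
begin

text \<open>Tensors of order p and dimension n are functions T :: nat list \<Rightarrow> 'a,
  whose meaningful entries are T xs for index lists xs of length p with entries
  in {0..<n} (0-based indexing, [n] = {0..<n}).\<close>

definition idxs :: "nat \<Rightarrow> nat \<Rightarrow> nat list set" where
  "idxs p n = {xs. length xs = p \<and> set xs \<subseteq> {..<n}}"

definition rsum :: "nat \<Rightarrow> nat \<Rightarrow> (nat list \<Rightarrow> real) \<Rightarrow> nat \<Rightarrow> real" where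
  "rsum p n T i = (\<Sum>js\<in>idxs (p - 1) n. \<bar>T (i # js)\<bar>)"

text \<open>General product AB, A of order m, B of order k, dimension n; the result has
  order (m-1)(k-1)+1 and index i # alpha_1 @ ... @ alpha_(m-1), each alpha_j of length k-1.\<close>
definition tprod :: "nat \<Rightarrow> nat \<Rightarrow> nat \<Rightarrow> (nat list \<Rightarrow> real) \<Rightarrow> (nat list \<Rightarrow> real) \<Rightarrow> (nat list \<Rightarrow> real)" where
  "tprod m k n A B = (\<lambda>idx.
     \<Sum>is\<in>idxs (m - 1) n. A (hd idx # is) *
        (\<Prod>j<m - 1. B ((is ! j) # take (k - 1) (drop (j * (k - 1)) (tl idx)))))"

definition tensor_eigenvalue :: "nat \<Rightarrow> nat \<Rightarrow> (nat list \<Rightarrow> real) \<Rightarrow> complex \<Rightarrow> bool" where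
  "tensor_eigenvalue m n A lam \<longleftrightarrow>
     (\<exists>x :: nat \<Rightarrow> complex. (\<exists>i<n. x i \<noteq> 0) \<and>
        (\<forall>i<n. (\<Sum>is\<in>idxs (m - 1) n. complex_of_real (A (i # is)) * (\<Prod>j<m - 1. x (is ! j)))
               = lam * x i ^ (m - 1)))"

definition spectral_radius :: "nat \<Rightarrow> nat \<Rightarrow> (nat list \<Rightarrow> real) \<Rightarrow> real" where
  "spectral_radius m n A = Sup (cmod ` {lam. tensor_eigenvalue m n A lam})"

end

theory Submission
  imports Defs "HOL-Analysis.Analysis"
begin

text \<open>
  Upper bound: if A x^(m-1) = \<lambda> x^[m-1] and k maximises |x_i| / w_i for positive weights w,
  then |\<lambda>| w_k^(m-1) \<le> (A w^(m-1))_k, so |\<lambda>| is at most the largest weighted row ratio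
  (A w^(m-1))_i / w_i^(m-1).
  Lower bound: conjugating A by diag w gives a nonnegative tensor whose row sums are these
  ratios, and a nonnegative tensor whose row sums are all at least c has a nonnegative
  eigenvector with eigenvalue at least c.  Brouwer's theorem, derived from Kuhn's labelling
  lemma on the unit cube, gives such eigenvectors for the perturbed maps x \<mapsto> A x^(m-1) + \<epsilon>
  normalised to the simplex, and compactness lets \<epsilon> tend to 0.
  For w_i = r_i(A) the weighted row ratios are exactly r_i(A^2) / r_i(A)^(m-1), because the
  row sums of A^2 factor through those of A.
\<close>

subsection \<open>Sums over index lists\<close>

lemma finite_idxs [simp]: "finite (idxs p n)"
proof -
  have "idxs p n = {xs. set xs \<subseteq> {..<n} \<and> length xs = p}"
    by (auto simp: idxs_def)
  then show ?thesis
    using finite_lists_length_eq[of "{..<n}" p] by simp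
qed

lemma idxs_nth: "is \<in> idxs p n \<Longrightarrow> j < p \<Longrightarrow> is ! j < n"
  unfolding idxs_def using nth_mem by fastforce

lemma sum_idxs_append:
  "(\<Sum>xs\<in>idxs (a + b) n. f xs) = (\<Sum>ys\<in>idxs a n. \<Sum>zs\<in>idxs b n. f (ys @ zs))"
proof -
  have "bij_betw (\<lambda>(ys, zs). ys @ zs) (idxs a n \<times> idxs b n) (idxs (a + b) n)"
    by (rule bij_betwI[where g = "\<lambda>xs. (take a xs, drop a xs)"])
      (auto simp: idxs_def dest: in_set_takeD in_set_dropD)
  then show ?thesis
    by (simp add: sum.reindex_bij_betw[symmetric] sum.cartesian_product prod.case_distrib)
qed

lemma take_drop_block_idxs:
  assumes "js \<in> idxs (p * q) n" "j < q"
  shows "take p (drop (j * p) js) \<in> idxs p n"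
proof -
  have "j * p + p \<le> p * q"
    using assms(2) by (metis Suc_leI add.commute mult.commute mult_Suc_right mult_le_mono2)
  then show ?thesis
    using assms(1) by (auto simp: idxs_def dest: in_set_takeD in_set_dropD)
qed

lemma sum_idxs_prod_blocks:
  fixes g :: "nat \<Rightarrow> nat list \<Rightarrow> 'a::comm_semiring_1"
  shows "(\<Sum>js\<in>idxs (p * q) n. \<Prod>j<q. g j (take p (drop (j * p) js)))
       = (\<Prod>j<q. \<Sum>a\<in>idxs p n. g j a)"
proof (induction q)
  case 0
  have "idxs 0 n = {[]}" by (auto simp: idxs_def)
  then show ?case by simp
next
  case (Suc q)
  have split: "(\<Prod>j<Suc q. g j (take p (drop (j * p) (ys @ zs))))
             = (\<Prod>j<q. g j (take p (drop (j * p) ys))) * g q zs"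
    if "ys \<in> idxs (p * q) n" "zs \<in> idxs p n" for ys zs
  proof -
    have "length ys = p * q" "length zs = p"
      using that by (auto simp: idxs_def)
    then have block: "take p (drop (j * p) (ys @ zs)) = take p (drop (j * p) ys)" if "j < q" for j
    proof -
      have "j * p + p \<le> p * q"
        using that by (metis Suc_leI add.commute mult.commute mult_Suc_right mult_le_mono2)
      then show ?thesis
        using \<open>length ys = p * q\<close> by (simp add: take_append)
    qed
    have "(\<Prod>j<q. g j (take p (drop (j * p) (ys @ zs)))) = (\<Prod>j<q. g j (take p (drop (j * p) ys)))"
      by (rule prod.cong[OF refl]) (metis block lessThan_iff)
    moreover have "take p (drop (q * p) (ys @ zs)) = zs"
      using \<open>length ys = p * q\<close> \<open>length zs = p\<close> by (simp add: mult.commute)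
    ultimately show ?thesis
      unfolding prod.lessThan_Suc by simp
  qed
  have "(\<Sum>js\<in>idxs (p * Suc q) n. \<Prod>j<Suc q. g j (take p (drop (j * p) js)))
      = (\<Sum>ys\<in>idxs (p * q) n. \<Sum>zs\<in>idxs p n. (\<Prod>j<q. g j (take p (drop (j * p) ys))) * g q zs)"
    unfolding mult_Suc_right add.commute[of p] sum_idxs_append by (intro sum.cong refl split)
  also have "\<dots> = (\<Sum>ys\<in>idxs (p * q) n. \<Prod>j<q. g j (take p (drop (j * p) ys))) * (\<Sum>zs\<in>idxs p n. g q zs)"
    by (simp add: sum_product)
  finally show ?case
    using Suc by simp
qed

subsection \<open>Tensors acting on vectors\<close>

text \<open>\<open>tensor_apply p n B x i\<close> is the entry (B x^p)_i for a tensor B of order p + 1.\<close>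

definition tensor_apply :: "nat \<Rightarrow> nat \<Rightarrow> (nat list \<Rightarrow> real) \<Rightarrow> (nat \<Rightarrow> 'a::real_field) \<Rightarrow> nat \<Rightarrow> 'a"
  where "tensor_apply p n B x i = (\<Sum>is\<in>idxs p n. of_real (B (i # is)) * (\<Prod>j<p. x (is ! j)))"

lemma tensor_eigenvalue_iff:
  "tensor_eigenvalue (Suc p) n A lam \<longleftrightarrow>
     (\<exists>x. (\<exists>i<n. x i \<noteq> 0) \<and> (\<forall>i<n. tensor_apply p n A x i = lam * x i ^ p))"
  by (simp add: tensor_eigenvalue_def tensor_apply_def)

lemma tensor_apply_of_real:
  "tensor_apply p n B (\<lambda>j. of_real (x j)) i = of_real (tensor_apply p n B x i)"
  by (simp add: tensor_apply_def)

lemma tensor_apply_const: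
  "tensor_apply p n B (\<lambda>_. a) i = (\<Sum>is\<in>idxs p n. B (i # is)) * (a::real) ^ p"
  by (simp add: tensor_apply_def sum_distrib_right)

lemma tensor_apply_nonneg:
  fixes x :: "nat \<Rightarrow> real"
  assumes "\<And>is. is \<in> idxs p n \<Longrightarrow> 0 \<le> B (i # is)" "\<And>j. j < n \<Longrightarrow> 0 \<le> x j"
  shows "0 \<le> tensor_apply p n B x i"
  unfolding tensor_apply_def using assms
  by (auto intro!: sum_nonneg mult_nonneg_nonneg prod_nonneg dest: idxs_nth)

lemma tensor_apply_mono:
  fixes x y :: "nat \<Rightarrow> real"
  assumes "\<And>is. is \<in> idxs p n \<Longrightarrow> 0 \<le> B (i # is)"
    and "\<And>j. j < n \<Longrightarrow> 0 \<le> x j" "\<And>j. j < n \<Longrightarrow> x j \<le> y j"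
  shows "tensor_apply p n B x i \<le> tensor_apply p n B y i"
  unfolding tensor_apply_def using assms
  by (auto intro!: sum_mono mult_left_mono prod_mono dest: idxs_nth)

lemma tensor_apply_tendsto:
  fixes X :: "nat \<Rightarrow> nat \<Rightarrow> real"
  assumes "\<And>j. j < n \<Longrightarrow> (\<lambda>k. X k j) \<longlonglongrightarrow> x j"
  shows "(\<lambda>k. tensor_apply p n B (X k) i) \<longlonglongrightarrow> tensor_apply p n B x i"
  unfolding tensor_apply_def using assms
  by (auto intro!: tendsto_intros dest: idxs_nth)

text \<open>For w = r(A) this is the quotient r_i(A^2) / r_i(A)^(m-1) of the theorem, see \<open>rsum_tprod_self\<close>.\<close>

definition weighted_row_ratio :: "nat \<Rightarrow> nat \<Rightarrow> (nat list \<Rightarrow> real) \<Rightarrow> (nat \<Rightarrow> real) \<Rightarrow> nat \<Rightarrow> real"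
  where "weighted_row_ratio p n A w i = tensor_apply p n A w i / w i ^ p"

lemma eigenvalue_norm_le_weighted_row_ratio:
  assumes eigen: "tensor_eigenvalue (Suc p) n A lam"
    and nonneg: "\<And>i is. i < n \<Longrightarrow> is \<in> idxs p n \<Longrightarrow> 0 \<le> A (i # is)"
    and w: "\<And>i. i < n \<Longrightarrow> 0 < w i"
  obtains k where "k < n" "cmod lam \<le> weighted_row_ratio p n A w k"
proof -
  obtain x where "\<exists>i<n. x i \<noteq> 0" and eq: "\<And>i. i < n \<Longrightarrow> tensor_apply p n A x i = lam * x i ^ p"
    using eigen by (auto simp: tensor_eigenvalue_iff)
  then obtain i0 where "i0 < n" "x i0 \<noteq> 0" by blast
  define z where "z i = cmod (x i) / w i" for i
  obtain k where k: "k < n" "z k = Max (z ` {..<n})"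
    using Max_in[of "z ` {..<n}"] \<open>i0 < n\<close> by fastforce
  have z_le: "z i \<le> z k" if "i < n" for i
    using k that by simp
  have "0 < z i0"
    using \<open>x i0 \<noteq> 0\<close> w[OF \<open>i0 < n\<close>] by (simp add: z_def)
  then have "0 < z k"
    using z_le[OF \<open>i0 < n\<close>] by linarith
  have x_le: "cmod (x j) \<le> z k * w j" if "j < n" for j
    using z_le[OF that] w[OF that] by (simp add: z_def field_simps)
  have "z k ^ p * (cmod lam * w k ^ p) = cmod (lam * x k ^ p)"
    using w[OF k(1)] by (simp add: z_def norm_mult norm_power power_divide)
  also have "\<dots> = cmod (tensor_apply p n A x k)"
    using eq[OF k(1)] by simp
  also have "\<dots> \<le> tensor_apply p n A (\<lambda>j. cmod (x j)) k"
    unfolding tensor_apply_def using nonneg[OF k(1)]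
    by (auto intro!: order_trans[OF norm_sum] sum_mono simp: norm_mult prod_norm)
  also have "\<dots> \<le> tensor_apply p n A (\<lambda>j. z k * w j) k"
    using nonneg[OF k(1)] x_le by (intro tensor_apply_mono) auto
  also have "\<dots> = z k ^ p * tensor_apply p n A w k"
    by (simp add: tensor_apply_def prod.distrib sum_distrib_left mult_ac)
  finally have "cmod lam * w k ^ p \<le> tensor_apply p n A w k"
    using \<open>0 < z k\<close> by (simp add: mult_le_cancel_left_pos)
  then show ?thesis
    using that[OF k(1)] w[OF k(1)] by (simp add: weighted_row_ratio_def pos_le_divide_eq)
qed

subsection \<open>Brouwer's fixed point theorem on the unit cube\<close>

definition cube :: "nat \<Rightarrow> (nat \<Rightarrow> real) set"
  where "cube n = {x. \<forall>i<n. 0 \<le> x i \<and> x i \<le> 1}"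

definition cube_seq_continuous :: "nat \<Rightarrow> ((nat \<Rightarrow> real) \<Rightarrow> nat \<Rightarrow> real) \<Rightarrow> bool"
  where "cube_seq_continuous n f \<longleftrightarrow>
    (\<forall>X x. (\<forall>k. X k \<in> cube n) \<longrightarrow> x \<in> cube n \<longrightarrow> (\<forall>i<n. (\<lambda>k. X k i) \<longlonglongrightarrow> x i)
      \<longrightarrow> (\<forall>i<n. (\<lambda>k. f (X k) i) \<longlonglongrightarrow> f x i))"

lemma cube_seq_continuousD:
  assumes "cube_seq_continuous n f" "\<And>k. X k \<in> cube n" "x \<in> cube n"
    "\<forall>j<n. (\<lambda>k. X k j) \<longlonglongrightarrow> x j" "i < n"
  shows "(\<lambda>k. f (X k) i) \<longlonglongrightarrow> f x i"
  using assms unfolding cube_seq_continuous_def by blast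

lemma bounded_coords_convergent_subseq:
  fixes X :: "nat \<Rightarrow> nat \<Rightarrow> real"
  assumes "\<And>k i. i < n \<Longrightarrow> \<bar>X k i\<bar> \<le> M"
  obtains r x where "strict_mono r" "\<forall>i<n. (\<lambda>k. X (r k) i) \<longlonglongrightarrow> x i"
proof -
  have "\<forall>\<delta>\<subseteq>{..<n}. \<exists>l r. strict_mono r \<and>
      (\<forall>\<epsilon>>0. \<forall>\<^sub>F k in sequentially. \<forall>i\<in>\<delta>. dist (X (r k) i) (l i) < \<epsilon>)"
    by (rule compact_lemma_general[where unproj = id]) (use assms in \<open>auto simp: bounded_iff\<close>)
  then obtain x r where "strict_mono r"
    and lim: "\<forall>\<epsilon>>0. \<forall>\<^sub>F k in sequentially. \<forall>i\<in>{..<n}. dist (X (r k) i) (x i) < \<epsilon>"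
    by (meson order_refl)
  show ?thesis
  proof (rule that[OF \<open>strict_mono r\<close>], intro allI impI)
    fix i assume "i < n"
    show "(\<lambda>k. X (r k) i) \<longlonglongrightarrow> x i"
      unfolding tendsto_iff
    proof (intro allI impI)
      fix \<epsilon> :: real assume "\<epsilon> > 0"
      from lim[rule_format, OF this]
      show "\<forall>\<^sub>F k in sequentially. dist (X (r k) i) (x i) < \<epsilon>"
        by (rule eventually_mono) (simp add: \<open>i < n\<close>)
    qed
  qed
qed

lemma cube_closed:
  fixes X :: "nat \<Rightarrow> nat \<Rightarrow> real"
  assumes "\<And>k. X k \<in> cube n" "\<And>i. i < n \<Longrightarrow> (\<lambda>k. X k i) \<longlonglongrightarrow> x i"
  shows "x \<in> cube n"
  unfolding cube_def
proof (intro CollectI allI impI conjI)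
  fix i assume "i < n"
  then have "\<And>k. 0 \<le> X k i \<and> X k i \<le> 1"
    using assms(1) by (simp add: cube_def)
  then show "0 \<le> x i" "x i \<le> 1"
    using assms(2)[OF \<open>i < n\<close>] by (auto intro: LIMSEQ_le_const LIMSEQ_le_const2)
qed

lemma cube_seq_compact:
  fixes X :: "nat \<Rightarrow> nat \<Rightarrow> real"
  assumes "\<And>k. X k \<in> cube n"
  obtains r x where "strict_mono r" "x \<in> cube n" "\<forall>i<n. (\<lambda>k. X (r k) i) \<longlonglongrightarrow> x i"
proof -
  have bound: "\<bar>X k i\<bar> \<le> 1" if "i < n" for k i
    using assms[of k] that by (simp add: cube_def)
  obtain r x where "strict_mono r" and lim: "\<forall>i<n. (\<lambda>k. X (r k) i) \<longlonglongrightarrow> x i"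
    by (rule bounded_coords_convergent_subseq[where X = X and n = n, OF bound])
  moreover have "x \<in> cube n"
    by (rule cube_closed[of "\<lambda>k. X (r k)"]) (use assms lim in auto)
  ultimately show ?thesis
    using that by blast
qed

definition grid_cell :: "nat \<Rightarrow> nat \<Rightarrow> (nat \<Rightarrow> nat) \<Rightarrow> (nat \<Rightarrow> real) \<Rightarrow> bool"
  where "grid_cell n p q v \<longleftrightarrow> v \<in> cube n \<and> (\<forall>j<n. q j / p \<le> v j \<and> v j \<le> q j / p + inverse p)"

lemma grid_vertex_in_cell:
  assumes "0 < p" "\<forall>j<n. q j < p" "\<forall>j<n. q j \<le> t j \<and> t j \<le> q j + 1"
  shows "grid_cell n p q (\<lambda>j. real (t j) / p)"
proof -
  have "\<forall>j<n. t j \<le> p"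
    using assms(2,3) by (auto intro: order_trans[OF _ Suc_leI])
  then show ?thesis
    using assms \<open>0 < p\<close>
    by (auto simp: grid_cell_def cube_def divide_right_mono field_simps simp flip: of_nat_Suc)
qed

lemma kuhn_cube_cell:
  assumes "0 < p" and into: "\<And>x. x \<in> cube n \<Longrightarrow> f x \<in> cube n"
  obtains q :: "nat \<Rightarrow> nat" where "\<forall>i<n. q i < p"
    "\<forall>i<n. \<exists>a b. grid_cell n p q a \<and> grid_cell n p q b \<and> a i \<le> f a i \<and> f b i \<le> b i"
proof -
  define P where "P r = (\<lambda>j. real (r j) / real p)" for r :: "nat \<Rightarrow> nat"
  \<comment> \<open>Label 0 where the coordinate does not decrease under f, 1 where it does not increase;
    on the faces of the cube the labels are forced as Kuhn's lemma requires.\<close>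
  define label where "label r i =
    (if P r i = 0 then 0 else if P r i = 1 then 1 else if P r i \<le> f (P r) i then 0 else 1 :: nat)"
    for r i
  have label_0: "P r i \<le> f (P r) i" if "P r \<in> cube n" "i < n" "label r i = 0" for r i
    using that into[OF that(1)] by (auto simp: label_def cube_def split: if_splits)
  have label_1: "f (P r) i \<le> P r i" if "P r \<in> cube n" "i < n" "label r i \<noteq> 0" for r i
    using that into[OF that(1)] by (auto simp: label_def cube_def split: if_splits)
  obtain q where q: "\<forall>i<n. q i < p" and cell: "\<forall>i<n. \<exists>r s.
      (\<forall>j<n. q j \<le> r j \<and> r j \<le> q j + 1) \<and> (\<forall>j<n. q j \<le> s j \<and> s j \<le> q j + 1) \<and> label r i \<noteq> label s i"
    by (rule kuhn_lemma[of p n label]) (use \<open>0 < p\<close> in \<open>auto simp: label_def P_def\<close>)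
  show ?thesis
  proof (rule that[OF q], intro allI impI)
    fix i assume "i < n"
    then obtain r s where r: "\<forall>j<n. q j \<le> r j \<and> r j \<le> q j + 1"
      and s: "\<forall>j<n. q j \<le> s j \<and> s j \<le> q j + 1" and "label r i \<noteq> label s i"
      using cell by blast
    have cells: "grid_cell n p q (P r)" "grid_cell n p q (P s)"
      unfolding P_def by (intro grid_vertex_in_cell[OF \<open>0 < p\<close> q] r s)+
    then have "P r \<in> cube n" "P s \<in> cube n"
      by (simp_all add: grid_cell_def)
    consider "label r i = 0" | "label s i = 0"
      using \<open>label r i \<noteq> label s i\<close> by (auto simp: label_def split: if_splits)
    then show "\<exists>a b. grid_cell n p q a \<and> grid_cell n p q b \<and> a i \<le> f a i \<and> f b i \<le> b i"
    proof cases
      case 1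
      then show ?thesis
        using cells label_0 label_1 \<open>P r \<in> cube n\<close> \<open>P s \<in> cube n\<close> \<open>i < n\<close> \<open>label r i \<noteq> label s i\<close>
        by (intro exI[of _ "P r"] exI[of _ "P s"]) simp
    next
      case 2
      then show ?thesis
        using cells label_0 label_1 \<open>P r \<in> cube n\<close> \<open>P s \<in> cube n\<close> \<open>i < n\<close> \<open>label r i \<noteq> label s i\<close>
        by (intro exI[of _ "P s"] exI[of _ "P r"]) simp
    qed
  qed
qed

lemma grid_cell_seq_tendsto:
  fixes V :: "nat \<Rightarrow> nat \<Rightarrow> real"
  assumes "strict_mono r" and lim: "\<forall>j<n. (\<lambda>k. real (q (r k) j) / Suc (r k)) \<longlonglongrightarrow> z j"
    and cell: "\<And>k. grid_cell n (Suc k) (q k) (V k)"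
  shows "\<forall>j<n. (\<lambda>k. V (r k) j) \<longlonglongrightarrow> z j"
proof (intro allI impI)
  fix j assume "j < n"
  have "(\<lambda>k. inverse (real (Suc (r k)))) \<longlonglongrightarrow> 0"
    using LIMSEQ_subseq_LIMSEQ[OF LIMSEQ_inverse_real_of_nat \<open>strict_mono r\<close>] by (simp add: o_def)
  with lim \<open>j < n\<close> have "(\<lambda>k. real (q (r k) j) / Suc (r k) + inverse (Suc (r k))) \<longlonglongrightarrow> z j"
    using tendsto_add[of "\<lambda>k. real (q (r k) j) / Suc (r k)" "z j"] by fastforce
  then show "(\<lambda>k. V (r k) j) \<longlonglongrightarrow> z j"
    by (rule tendsto_sandwich[where f = "\<lambda>k. real (q (r k) j) / Suc (r k)", rotated 3])
      (use cell lim \<open>j < n\<close> in \<open>auto simp: grid_cell_def\<close>)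
qed

theorem cube_fixed_point:
  assumes cont: "cube_seq_continuous n f" and into: "\<And>x. x \<in> cube n \<Longrightarrow> f x \<in> cube n"
  obtains z where "z \<in> cube n" "\<forall>i<n. f z i = z i"
proof -
  have "\<exists>q. (\<forall>i<n. q i < Suc k) \<and>
      (\<forall>i<n. \<exists>a b. grid_cell n (Suc k) q a \<and> grid_cell n (Suc k) q b \<and> a i \<le> f a i \<and> f b i \<le> b i)" for k
    by (rule kuhn_cube_cell[of "Suc k" n f]) (use into in blast)+
  then obtain q where q: "\<And>k. \<forall>i<n. q k i < Suc k" and cell: "\<And>k. \<forall>i<n. \<exists>a b.
      grid_cell n (Suc k) (q k) a \<and> grid_cell n (Suc k) (q k) b \<and> a i \<le> f a i \<and> f b i \<le> b i"
    by metis
  have "(\<lambda>j. real (q k j) / Suc k) \<in> cube n" for k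
    using q[of k] by (auto simp: cube_def)
  then obtain r z where r: "strict_mono r" and "z \<in> cube n"
    and lim: "\<forall>j<n. (\<lambda>k. real (q (r k) j) / Suc (r k)) \<longlonglongrightarrow> z j"
    by (rule cube_seq_compact)
  have image_lim: "(\<lambda>k. f (V (r k)) i) \<longlonglongrightarrow> f z i"
    if "\<And>k. grid_cell n (Suc k) (q k) (V k)" "i < n" for V i
    using that(1) by (intro cube_seq_continuousD[OF cont _ \<open>z \<in> cube n\<close>
        grid_cell_seq_tendsto[OF r lim that(1)] that(2)]) (auto simp: grid_cell_def)
  show ?thesis
  proof (rule that[OF \<open>z \<in> cube n\<close>], intro allI impI)
    fix i assume "i < n"
    then have "\<forall>k. \<exists>a b. grid_cell n (Suc k) (q k) a \<and> grid_cell n (Suc k) (q k) b \<and> a i \<le> f a i \<and> f b i \<le> b i"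
      using cell by blast
    then obtain a b where ab: "\<And>k. grid_cell n (Suc k) (q k) (a k)" "\<And>k. grid_cell n (Suc k) (q k) (b k)"
      "\<And>k. a k i \<le> f (a k) i" "\<And>k. f (b k) i \<le> b k i"
      by metis
    have "(\<lambda>k. a (r k) i) \<longlonglongrightarrow> z i" "(\<lambda>k. b (r k) i) \<longlonglongrightarrow> z i"
      using grid_cell_seq_tendsto[OF r lim ab(1)] grid_cell_seq_tendsto[OF r lim ab(2)] \<open>i < n\<close> by auto
    then have "z i \<le> f z i" "f z i \<le> z i"
      using ab(3,4) by (auto intro: LIMSEQ_le image_lim[OF ab(1) \<open>i < n\<close>] image_lim[OF ab(2) \<open>i < n\<close>])
    then show "f z i = z i"
      by simp
  qed
qed

subsection \<open>Nonnegative eigenvectors of nonnegative tensors\<close>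

lemma normalized_fixed_point:
  assumes "0 < n" and cont: "cube_seq_continuous n g"
    and pos: "\<And>z i. z \<in> cube n \<Longrightarrow> i < n \<Longrightarrow> 0 < g z i"
  obtains z where "z \<in> cube n" "(\<Sum>i<n. z i) = 1" "\<forall>i<n. g z i = (\<Sum>j<n. g z j) * z i"
proof -
  define S where "S z = (\<Sum>j<n. g z j)" for z
  define F where "F z i = g z i / S z" for z i
  have S_pos: "0 < S z" if "z \<in> cube n" for z
    unfolding S_def using \<open>0 < n\<close> pos[OF that] by (intro sum_pos) auto
  have "g z i \<le> S z" if "z \<in> cube n" "i < n" for z i
    unfolding S_def using that pos[OF that(1)] by (intro member_le_sum) (auto intro: less_imp_le)
  then have into: "F z \<in> cube n" if "z \<in> cube n" for z
    using that pos S_pos by (auto simp: cube_def F_def intro: less_imp_le)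
  have "cube_seq_continuous n F"
    unfolding cube_seq_continuous_def
  proof (intro allI impI)
    fix Z z i assume Z: "\<forall>k. Z k \<in> cube n" "z \<in> cube n" "\<forall>j<n. (\<lambda>k. Z k j) \<longlonglongrightarrow> z j" and "i < n"
    then have g_lim: "(\<lambda>k. g (Z k) j) \<longlonglongrightarrow> g z j" if "j < n" for j
      using cube_seq_continuousD[OF cont _ Z(2,3) that] by blast
    then have "(\<lambda>k. S (Z k)) \<longlonglongrightarrow> S z"
      unfolding S_def by (intro tendsto_sum) auto
    then show "(\<lambda>k. F (Z k) i) \<longlonglongrightarrow> F z i"
      unfolding F_def using g_lim \<open>i < n\<close> S_pos[OF Z(2)] by (intro tendsto_divide) auto
  qed
  then obtain z where "z \<in> cube n" and fixed: "\<forall>i<n. F z i = z i"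
    using into by (rule cube_fixed_point)
  have "(\<Sum>i<n. z i) = (\<Sum>i<n. g z i) / S z"
    using fixed by (simp add: F_def sum_divide_distrib)
  also have "\<dots> = 1"
    using S_pos[OF \<open>z \<in> cube n\<close>] by (simp add: S_def)
  finally have "(\<Sum>i<n. z i) = 1" .
  moreover have "\<forall>i<n. g z i = S z * z i"
    using fixed S_pos[OF \<open>z \<in> cube n\<close>] by (simp add: F_def field_simps)
  ultimately show ?thesis
    using that \<open>z \<in> cube n\<close> unfolding S_def by blast
qed

lemma perturbed_eigenvector:
  assumes "0 < p" "0 < n" "0 < \<epsilon>"
    and nonneg: "\<And>i is. i < n \<Longrightarrow> is \<in> idxs p n \<Longrightarrow> 0 \<le> B (i # is)"
  obtains lam z where "z \<in> cube n" "(\<Sum>i<n. z i) = 1"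
    "\<forall>i<n. tensor_apply p n B z i + \<epsilon> = lam * z i ^ p"
proof -
  \<comment> \<open>Thanks to \<open>\<epsilon>\<close> the map is positive on the whole cube, so it can be normalised.\<close>
  define g where "g z i = root p (tensor_apply p n B z i + \<epsilon>)" for z i
  have T_nonneg: "0 \<le> tensor_apply p n B z i" if "z \<in> cube n" "i < n" for z i
    using that nonneg by (intro tensor_apply_nonneg) (auto simp: cube_def)
  have "cube_seq_continuous n g"
    unfolding cube_seq_continuous_def g_def
    by (auto intro!: tendsto_real_root tendsto_add tensor_apply_tendsto)
  moreover have "0 < g z i" if "z \<in> cube n" "i < n" for z i
    using T_nonneg[OF that] \<open>0 < \<epsilon>\<close> \<open>0 < p\<close> by (simp add: g_def)
  ultimately obtain z where "z \<in> cube n" "(\<Sum>i<n. z i) = 1"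
    and fixed: "\<forall>i<n. g z i = (\<Sum>j<n. g z j) * z i"
    using normalized_fixed_point[OF \<open>0 < n\<close>] by blast
  moreover have "tensor_apply p n B z i + \<epsilon> = (\<Sum>j<n. g z j) ^ p * z i ^ p" if "i < n" for i
  proof -
    have "tensor_apply p n B z i + \<epsilon> = g z i ^ p"
      using T_nonneg[OF \<open>z \<in> cube n\<close> that] \<open>0 < \<epsilon>\<close> \<open>0 < p\<close> by (simp add: g_def real_root_pow_pos2)
    then show ?thesis
      using fixed that by (simp add: power_mult_distrib)
  qed
  ultimately show ?thesis
    using that by blast
qed

lemma perturbed_eigenvalue_ge:
  assumes "0 < p" "0 < n" "0 < \<epsilon>"
    and nonneg: "\<And>i is. i < n \<Longrightarrow> is \<in> idxs p n \<Longrightarrow> 0 \<le> B (i # is)"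
    and lower: "\<And>i. i < n \<Longrightarrow> c \<le> (\<Sum>is\<in>idxs p n. B (i # is))"
    and "z \<in> cube n" and eq: "\<forall>i<n. tensor_apply p n B z i + \<epsilon> = lam * z i ^ p"
  shows "c \<le> lam"
proof -
  have z_nonneg: "0 \<le> z i" if "i < n" for i
    using \<open>z \<in> cube n\<close> that by (simp add: cube_def)
  obtain k where "k < n" and k_min: "\<And>i. i < n \<Longrightarrow> z k \<le> z i"
    using ex_is_arg_min_if_finite[of "{..<n}" z] \<open>0 < n\<close> by (auto simp: is_arg_min_linorder)
  have "0 \<le> tensor_apply p n B z k"
    using nonneg \<open>k < n\<close> z_nonneg by (intro tensor_apply_nonneg) auto
  have "z k \<noteq> 0"
  proof
    assume "z k = 0"
    then have "tensor_apply p n B z k + \<epsilon> = 0"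
      using eq \<open>k < n\<close> \<open>0 < p\<close> by simp
    then show False
      using \<open>0 \<le> tensor_apply p n B z k\<close> \<open>0 < \<epsilon>\<close> by linarith
  qed
  have "c * z k ^ p \<le> (\<Sum>is\<in>idxs p n. B (k # is)) * z k ^ p"
    using lower[OF \<open>k < n\<close>] z_nonneg[OF \<open>k < n\<close>] by (simp add: mult_right_mono)
  also have "\<dots> = tensor_apply p n B (\<lambda>_. z k) k"
    by (simp add: tensor_apply_const)
  also have "\<dots> \<le> tensor_apply p n B z k"
    using nonneg \<open>k < n\<close> z_nonneg k_min by (intro tensor_apply_mono) auto
  also have "\<dots> \<le> lam * z k ^ p"
    using eq \<open>k < n\<close> \<open>0 < \<epsilon>\<close> by force
  finally show "c \<le> lam"
    using \<open>z k \<noteq> 0\<close> z_nonneg[OF \<open>k < n\<close>] by simp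
qed

lemma perturbed_eigenvalue_le:
  assumes "0 < \<epsilon>"
    and nonneg: "\<And>i is. i < n \<Longrightarrow> is \<in> idxs p n \<Longrightarrow> 0 \<le> B (i # is)"
    and upper: "\<And>i. i < n \<Longrightarrow> (\<Sum>is\<in>idxs p n. B (i # is)) \<le> R"
    and z: "z \<in> cube n" "(\<Sum>i<n. z i) = 1"
    and eq: "\<forall>i<n. tensor_apply p n B z i + \<epsilon> = lam * z i ^ p"
  shows "lam \<le> (R + \<epsilon>) * real n ^ p"
proof -
  have "0 < n"
    using z(2) by (cases n) auto
  obtain k where "k < n" and k_max: "\<And>i. i < n \<Longrightarrow> z i \<le> z k"
    using ex_is_arg_min_if_finite[of "{..<n}" "\<lambda>i. - z i"] \<open>0 < n\<close> by (auto simp: is_arg_min_linorder)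
  have "1 \<le> real n * z k"
    using z(2) sum_mono[of "{..<n}" z "\<lambda>_. z k"] k_max by simp
  have z_nonneg: "0 \<le> z i" if "i < n" for i
    using z(1) that by (simp add: cube_def)
  have T_le: "tensor_apply p n B z k \<le> tensor_apply p n B (\<lambda>_. 1) k"
    using nonneg \<open>k < n\<close> z_nonneg z(1) by (intro tensor_apply_mono) (auto simp: cube_def)
  have "0 \<le> tensor_apply p n B z k"
    using nonneg \<open>k < n\<close> z_nonneg by (intro tensor_apply_nonneg) auto
  then have "0 < lam * z k ^ p"
    using eq \<open>k < n\<close> \<open>0 < \<epsilon>\<close> by force
  then have "0 \<le> lam"
    using z_nonneg[OF \<open>k < n\<close>] by (simp add: zero_less_mult_iff)
  then have "lam * 1 \<le> lam * (real n * z k) ^ p"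
    using \<open>1 \<le> real n * z k\<close> by (intro mult_left_mono one_le_power)
  then have "lam \<le> lam * (real n * z k) ^ p"
    by simp
  also have "\<dots> = (tensor_apply p n B z k + \<epsilon>) * real n ^ p"
    using eq \<open>k < n\<close> by (simp add: power_mult_distrib)
  also have "\<dots> \<le> (R + \<epsilon>) * real n ^ p"
    using T_le upper[OF \<open>k < n\<close>] by (simp add: tensor_apply_const mult_right_mono)
  finally show ?thesis .
qed

lemma cube_bounded_seq_compact:
  fixes Z :: "nat \<Rightarrow> nat \<Rightarrow> real" and L :: "nat \<Rightarrow> real"
  assumes Z: "\<And>k. Z k \<in> cube n" and L: "\<And>k. \<bar>L k\<bar> \<le> M"
  obtains r x l where "strict_mono r" "x \<in> cube n" "\<forall>i<n. (\<lambda>k. Z (r k) i) \<longlonglongrightarrow> x i"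
    "(\<lambda>k. L (r k)) \<longlonglongrightarrow> l"
proof -
  \<comment> \<open>Append the scalar as coordinate n, so that a single subsequence serves both.\<close>
  define X where "X k = (Z k)(n := L k)" for k
  have "0 \<le> M"
    using L[of 0] by linarith
  then have "\<bar>X k i\<bar> \<le> 1 + M" if "i < Suc n" for k i
    using Z[of k] L[of k] that by (auto simp: X_def cube_def less_Suc_eq)
  then obtain r x where "strict_mono r" and lim: "\<forall>i<Suc n. (\<lambda>k. X (r k) i) \<longlonglongrightarrow> x i"
    by (rule bounded_coords_convergent_subseq)
  moreover have Z_lim: "\<forall>i<n. (\<lambda>k. Z (r k) i) \<longlonglongrightarrow> x i"
  proof (intro allI impI)
    fix i assume "i < n"
    then show "(\<lambda>k. Z (r k) i) \<longlonglongrightarrow> x i"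
      using lim[rule_format, of i] by (simp add: X_def)
  qed
  moreover have "x \<in> cube n"
    by (rule cube_closed[of "\<lambda>k. Z (r k)"]) (use Z Z_lim in auto)
  moreover have "(\<lambda>k. L (r k)) \<longlonglongrightarrow> x n"
    using lim[rule_format, of n] by (simp add: X_def)
  ultimately show ?thesis
    using that by blast
qed

lemma eigenpair_limit:
  fixes Z :: "nat \<Rightarrow> nat \<Rightarrow> real" and L \<epsilon> :: "nat \<Rightarrow> real"
  assumes Z: "\<And>k. Z k \<in> cube n" "\<And>k. (\<Sum>i<n. Z k i) = 1"
    and L: "\<And>k. c \<le> L k" "\<And>k. L k \<le> U"
    and "\<epsilon> \<longlonglongrightarrow> 0"
    and eq: "\<And>k. \<forall>i<n. tensor_apply p n B (Z k) i + \<epsilon> k = L k * Z k i ^ p"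
  obtains lam y where "c \<le> lam" "y \<in> cube n" "(\<Sum>i<n. y i) = 1"
    "\<forall>i<n. tensor_apply p n B y i = lam * y i ^ p"
proof -
  have "\<bar>L k\<bar> \<le> \<bar>c\<bar> + \<bar>U\<bar>" for k
    using L[of k] by linarith
  then obtain r y lam where r: "strict_mono r" and "y \<in> cube n"
    and Z_lim: "\<forall>i<n. (\<lambda>k. Z (r k) i) \<longlonglongrightarrow> y i" and L_lim: "(\<lambda>k. L (r k)) \<longlonglongrightarrow> lam"
    by (rule cube_bounded_seq_compact[OF Z(1)])
  have "(\<Sum>i<n. y i) = 1"
  proof (rule LIMSEQ_unique)
    show "(\<lambda>k. \<Sum>i<n. Z (r k) i) \<longlonglongrightarrow> (\<Sum>i<n. y i)"
      using Z_lim by (intro tendsto_sum) auto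
  qed (simp add: Z(2))
  moreover have "tensor_apply p n B y i = lam * y i ^ p" if "i < n" for i
  proof (rule LIMSEQ_unique)
    have "(\<lambda>k. \<epsilon> (r k)) \<longlonglongrightarrow> 0"
      using LIMSEQ_subseq_LIMSEQ[OF \<open>\<epsilon> \<longlonglongrightarrow> 0\<close> r] by (simp add: o_def)
    moreover have "(\<lambda>k. tensor_apply p n B (Z (r k)) i) \<longlonglongrightarrow> tensor_apply p n B y i"
      using Z_lim by (intro tensor_apply_tendsto) auto
    ultimately show "(\<lambda>k. tensor_apply p n B (Z (r k)) i + \<epsilon> (r k)) \<longlonglongrightarrow> tensor_apply p n B y i"
      using tendsto_add by fastforce
    have "(\<lambda>k. L (r k) * Z (r k) i ^ p) \<longlonglongrightarrow> lam * y i ^ p"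
      using Z_lim L_lim that by (intro tendsto_mult tendsto_power) auto
    then show "(\<lambda>k. tensor_apply p n B (Z (r k)) i + \<epsilon> (r k)) \<longlonglongrightarrow> lam * y i ^ p"
      using eq that by simp
  qed
  moreover have "c \<le> lam"
    using L_lim L by (intro LIMSEQ_le_const) auto
  ultimately show ?thesis
    using that \<open>y \<in> cube n\<close> by blast
qed

lemma nonneg_tensor_eigenvector:
  assumes "0 < p" "0 < n"
    and nonneg: "\<And>i is. i < n \<Longrightarrow> is \<in> idxs p n \<Longrightarrow> 0 \<le> B (i # is)"
    and lower: "\<And>i. i < n \<Longrightarrow> c \<le> (\<Sum>is\<in>idxs p n. B (i # is))"
  obtains lam y where "c \<le> lam" "y \<in> cube n" "(\<Sum>i<n. y i) = 1"
    "\<forall>i<n. tensor_apply p n B y i = lam * y i ^ p"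
proof -
  define R where "R = (\<Sum>i<n. \<Sum>is\<in>idxs p n. B (i # is))"
  have upper: "(\<Sum>is\<in>idxs p n. B (i # is)) \<le> R" if "i < n" for i
    unfolding R_def using that nonneg
    by (intro member_le_sum[of i _ "\<lambda>i. \<Sum>is\<in>idxs p n. B (i # is)"]) (auto intro: sum_nonneg)
  define \<epsilon> where "\<epsilon> k = inverse (real (Suc k))" for k
  have \<epsilon>: "0 < \<epsilon> k" "\<epsilon> k \<le> 1" for k
    by (auto simp: \<epsilon>_def inverse_le_1_iff)
  have "\<exists>lam z. z \<in> cube n \<and> (\<Sum>i<n. z i) = 1 \<and> (\<forall>i<n. tensor_apply p n B z i + \<epsilon> k = lam * z i ^ p)" for k
    by (rule perturbed_eigenvector[where B = B, OF \<open>0 < p\<close> \<open>0 < n\<close> \<epsilon>(1) nonneg])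
      (rule exI conjI | assumption)+
  then obtain L Z where Z: "\<And>k. Z k \<in> cube n" "\<And>k. (\<Sum>i<n. Z k i) = 1"
    and eq: "\<And>k. \<forall>i<n. tensor_apply p n B (Z k) i + \<epsilon> k = L k * Z k i ^ p"
    by metis
  have L_ge: "c \<le> L k" for k
    by (rule perturbed_eigenvalue_ge[where B = B, OF \<open>0 < p\<close> \<open>0 < n\<close> \<epsilon>(1) nonneg lower Z(1) eq])
  have L_le: "L k \<le> (R + 1) * real n ^ p" for k
  proof -
    have "L k \<le> (R + \<epsilon> k) * real n ^ p"
      by (rule perturbed_eigenvalue_le[where B = B, OF \<epsilon>(1) nonneg upper Z(1,2) eq])
    also have "\<dots> \<le> (R + 1) * real n ^ p"
      using \<epsilon>(2) by (simp add: mult_right_mono)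
    finally show ?thesis .
  qed
  have "\<epsilon> \<longlonglongrightarrow> 0"
    using LIMSEQ_inverse_real_of_nat by (simp add: \<epsilon>_def [abs_def])
  show ?thesis
    by (rule eigenpair_limit[OF Z L_ge L_le \<open>\<epsilon> \<longlonglongrightarrow> 0\<close> eq]) (rule that)
qed

subsection \<open>Weighted row ratios bound the spectral radius\<close>

text \<open>The conjugate of A by the diagonal matrix diag w.\<close>

definition diag_scale :: "nat \<Rightarrow> (nat \<Rightarrow> real) \<Rightarrow> (nat list \<Rightarrow> real) \<Rightarrow> nat list \<Rightarrow> real"
  where "diag_scale p w A xs = A xs * (\<Prod>j<p. w (tl xs ! j)) / w (hd xs) ^ p"

lemma diag_scale_nonneg:
  assumes "0 \<le> A (i # is)" "is \<in> idxs p n" "0 < w i" "\<And>j. j < n \<Longrightarrow> 0 < w j"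
  shows "0 \<le> diag_scale p w A (i # is)"
proof -
  have "0 \<le> (\<Prod>j<p. w (is ! j))"
    using assms(2,4) by (intro prod_nonneg) (auto intro: less_imp_le dest: idxs_nth)
  then show ?thesis
    using assms(1,3) by (simp add: diag_scale_def)
qed

lemma row_sum_diag_scale:
  "(\<Sum>is\<in>idxs p n. diag_scale p w A (i # is)) = weighted_row_ratio p n A w i"
  by (simp add: diag_scale_def weighted_row_ratio_def tensor_apply_def sum_divide_distrib)

lemma tensor_apply_diag_scale:
  assumes "w i \<noteq> 0"
  shows "tensor_apply p n A (\<lambda>j. w j * y j) i = w i ^ p * tensor_apply p n (diag_scale p w A) y i"
  unfolding tensor_apply_def sum_distrib_left
  by (intro sum.cong refl) (use assms in \<open>simp add: diag_scale_def prod.distrib\<close>)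

lemma real_eigenvalue_ge_weighted_row_ratio:
  assumes "0 < p" "0 < n"
    and nonneg: "\<And>i is. i < n \<Longrightarrow> is \<in> idxs p n \<Longrightarrow> 0 \<le> A (i # is)"
    and w: "\<And>i. i < n \<Longrightarrow> 0 < w i"
  obtains lam where "tensor_eigenvalue (Suc p) n A (complex_of_real lam)"
    "Min (weighted_row_ratio p n A w ` {..<n}) \<le> lam"
proof -
  have scaled_nonneg: "0 \<le> diag_scale p w A (i # is)" if "i < n" "is \<in> idxs p n" for i "is"
    using diag_scale_nonneg[where A = A and w = w, OF nonneg[OF that] that(2) w[OF that(1)] w] .
  have "Min (weighted_row_ratio p n A w ` {..<n}) \<le> (\<Sum>is\<in>idxs p n. diag_scale p w A (i # is))"
    if "i < n" for i
    using that by (simp add: row_sum_diag_scale)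
  note eigenvector =
    nonneg_tensor_eigenvector[where B = "diag_scale p w A", OF \<open>0 < p\<close> \<open>0 < n\<close> scaled_nonneg this]
  obtain lam y
    where "Min (weighted_row_ratio p n A w ` {..<n}) \<le> lam" "y \<in> cube n" "(\<Sum>i<n. y i) = 1"
      and eigen: "\<forall>i<n. tensor_apply p n (diag_scale p w A) y i = lam * y i ^ p"
    by (rule eigenvector)
  obtain i0 where "i0 < n" "y i0 \<noteq> 0"
    using \<open>(\<Sum>i<n. y i) = 1\<close> by (metis lessThan_iff sum.neutral zero_neq_one)
  then have "\<exists>i<n. complex_of_real (w i * y i) \<noteq> 0"
    using w[OF \<open>i0 < n\<close>] by auto
  moreover have "tensor_apply p n A (\<lambda>j. complex_of_real (w j * y j)) i
      = complex_of_real lam * complex_of_real (w i * y i) ^ p" if "i < n" for i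
  proof -
    have "tensor_apply p n A (\<lambda>j. w j * y j) i = lam * (w i * y i) ^ p"
      using tensor_apply_diag_scale[of w i p n A y] w[OF that] eigen that
      by (simp add: power_mult_distrib)
    then show ?thesis
      using tensor_apply_of_real[of p n A "\<lambda>j. w j * y j" i] by simp
  qed
  ultimately have "tensor_eigenvalue (Suc p) n A (complex_of_real lam)"
    unfolding tensor_eigenvalue_iff by (intro exI[of _ "\<lambda>j. complex_of_real (w j * y j)"]) blast
  then show ?thesis
    using that \<open>Min (weighted_row_ratio p n A w ` {..<n}) \<le> lam\<close> by blast
qed

lemma spectral_radius_between_weighted_row_ratios:
  assumes "0 < p" "0 < n"
    and nonneg: "\<And>i is. i < n \<Longrightarrow> is \<in> idxs p n \<Longrightarrow> 0 \<le> A (i # is)"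
    and w: "\<And>i. i < n \<Longrightarrow> 0 < w i"
  shows "Min (weighted_row_ratio p n A w ` {..<n}) \<le> spectral_radius (Suc p) n A"
    and "spectral_radius (Suc p) n A \<le> Max (weighted_row_ratio p n A w ` {..<n})"
proof -
  define Q where "Q = weighted_row_ratio p n A w"
  define E where "E = cmod ` {lam. tensor_eigenvalue (Suc p) n A lam}"
  have E_le: "e \<le> Max (Q ` {..<n})" if "e \<in> E" for e
  proof -
    obtain lam where "tensor_eigenvalue (Suc p) n A lam" "e = cmod lam"
      using \<open>e \<in> E\<close> by (auto simp: E_def)
    moreover from this(1) obtain k where "k < n" "cmod lam \<le> Q k"
      unfolding Q_def by (rule eigenvalue_norm_le_weighted_row_ratio[where A = A, OF _ nonneg w])
    moreover have "Q k \<le> Max (Q ` {..<n})"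
      using \<open>k < n\<close> by simp
    ultimately show ?thesis
      by linarith
  qed
  obtain lam where "tensor_eigenvalue (Suc p) n A (complex_of_real lam)" "Min (Q ` {..<n}) \<le> lam"
    unfolding Q_def by (rule real_eigenvalue_ge_weighted_row_ratio[where A = A, OF \<open>0 < p\<close> \<open>0 < n\<close> nonneg w])
  then have "cmod (complex_of_real lam) \<in> E"
    unfolding E_def by (intro imageI CollectI)
  then have "cmod (complex_of_real lam) \<le> Sup E"
    using E_le by (intro cSup_upper) (auto simp: bdd_above_def)
  then show "Min (Q ` {..<n}) \<le> spectral_radius (Suc p) n A"
    using \<open>Min (Q ` {..<n}) \<le> lam\<close> by (simp add: spectral_radius_def E_def)
  show "spectral_radius (Suc p) n A \<le> Max (Q ` {..<n})"
    unfolding spectral_radius_def E_def[symmetric]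
    using E_le \<open>cmod (complex_of_real lam) \<in> E\<close> by (intro cSup_least) auto
qed

lemma rsum_eq_row_sum:
  assumes "\<And>is. is \<in> idxs p n \<Longrightarrow> 0 \<le> A (i # is)"
  shows "rsum (Suc p) n A i = (\<Sum>is\<in>idxs p n. A (i # is))"
  unfolding rsum_def using assms by simp

lemma rsum_tprod_self:
  assumes nonneg: "\<And>i is. i < n \<Longrightarrow> is \<in> idxs p n \<Longrightarrow> 0 \<le> A (i # is)" and "i < n"
  shows "rsum (p * p + 1) n (tprod (Suc p) (Suc p) n A A) i = tensor_apply p n A (rsum (Suc p) n A) i"
proof -
  have tprod: "tprod (Suc p) (Suc p) n A A (i # js)
      = (\<Sum>is\<in>idxs p n. A (i # is) * (\<Prod>j<p. A (is ! j # take p (drop (j * p) js))))" for js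
    by (simp add: tprod_def)
  have "0 \<le> tprod (Suc p) (Suc p) n A A (i # js)" if "js \<in> idxs (p * p) n" for js
    unfolding tprod using that \<open>i < n\<close>
    by (auto intro!: sum_nonneg mult_nonneg_nonneg prod_nonneg nonneg take_drop_block_idxs
        dest: idxs_nth)
  then have "rsum (p * p + 1) n (tprod (Suc p) (Suc p) n A A) i
      = (\<Sum>js\<in>idxs (p * p) n. tprod (Suc p) (Suc p) n A A (i # js))"
    by (simp add: rsum_def)
  also have "\<dots> = (\<Sum>is\<in>idxs p n. A (i # is)
      * (\<Sum>js\<in>idxs (p * p) n. \<Prod>j<p. A (is ! j # take p (drop (j * p) js))))"
    unfolding tprod by (simp add: sum_distrib_left sum.swap[of _ "idxs p n"])
  also have "\<dots> = (\<Sum>is\<in>idxs p n. A (i # is) * (\<Prod>j<p. rsum (Suc p) n A (is ! j)))"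
    by (intro sum.cong refl arg_cong2[where f = "(*)"])
      (auto simp: sum_idxs_prod_blocks[where g = "\<lambda>j a. A (_ ! j # a)"] rsum_eq_row_sum
        nonneg idxs_nth intro!: prod.cong)
  finally show ?thesis
    by (simp add: tensor_apply_def)
qed

theorem theorem3p2:
  fixes m n :: nat and A :: "nat list \<Rightarrow> real"
  assumes "m \<ge> 2" and "n \<ge> 1"
    and "\<forall>xs\<in>idxs m n. A xs \<ge> 0"
    and "\<forall>i<n. rsum m n A i \<noteq> 0"
  shows "Min ((\<lambda>i. rsum ((m - 1) * (m - 1) + 1) n (tprod m m n A A) i / (rsum m n A i) ^ (m - 1)) ` {..<n})
           \<le> spectral_radius m n A
       \<and> spectral_radius m n A
           \<le> Max ((\<lambda>i. rsum ((m - 1) * (m - 1) + 1) n (tprod m m n A A) i / (rsum m n A i) ^ (m - 1)) ` {..<n})"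
proof -
  obtain p where m: "m = Suc p" and "0 < p"
    using assms(1) by (cases m) auto
  have nonneg: "0 \<le> A (i # is)" if "i < n" "is \<in> idxs p n" for i "is"
    using assms(3) that by (auto simp: idxs_def m)
  have r_pos: "0 < rsum (Suc p) n A i" if "i < n" for i
    using assms(4) that rsum_def[of "Suc p" n A i] sum_nonneg[of _ "\<lambda>js. \<bar>A (i # js)\<bar>"]
    by (fastforce simp: m order_less_le)
  have "(\<lambda>i. rsum (p * p + 1) n (tprod (Suc p) (Suc p) n A A) i / rsum (Suc p) n A i ^ p) ` {..<n}
      = weighted_row_ratio p n A (rsum (Suc p) n A) ` {..<n}"
    using rsum_tprod_self[where A = A, OF nonneg] by (intro image_cong) (auto simp: weighted_row_ratio_def)
  with spectral_radius_between_weighted_row_ratios[where A = A, OF \<open>0 < p\<close> _ nonneg r_pos] assms(2)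
  show ?thesis
    by (simp add: m)
qed

end
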